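(* Let $G$ be a graph, and let $B,C\subseteq V(G)$ where $B$ covers $C$. Suppose every induced subgraph $J$ of $G$ with $\omega(J)<\omega(G)$ has chromatic number at most $\tau$. Let the enumeration $(b_1,\ldots,b_m)$ of $B$ and the grading $(W_1,\ldots,W_n)$ of $G[C]$ be compatible, and let the grading be $w$-colourable. Let $\ell,\rho\ge 3$ be integers, and suppose $$\chi(C)>w\tau\bigl(4(\ell+2)\chi^{\rho}(G)+w\bigr).$$ Then there is an induced path $p_1\hbox{-}\cdots\hbox{-}p_k$ of $G[C]$ such that: $k\ge \ell$; $p_1p_2$ is a square edge; $p_1,p_2$ are both earlier than all of $p_3,\ldots,p_k$; and, letting $b,b'$ be the earliest parents of $p_1,p_2$ respectively, for each $v\in\{b,b',p_1,\ldots,p_\ell\}$ the $G$-distance between $p_k$ and $v$ is at least $\rho+1$.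
   Context: Graphs are finite and simple; $\chi(X)=\chi(G[X])$. $B$ covers $C$ means $B\cap C=\emptyset$ and every vertex of $C$ has a neighbour in $B$. Given an enumeration $(b_1,\ldots,b_m)$ of $B$, $b_i$ is earlier than $b_j$ if $i<j$; the earliest parent of $v\in C$ is $b_i$ with $i$ minimum such that $b_iv$ is an edge. An edge $uv$ of $G[C]$ is square if the earliest parent of $u$ is nonadjacent to $v$ and the earliest parent of $v$ is nonadjacent to $u$. A grading of $G[C]$ is a sequence $(W_1,\ldots,W_n)$ of pairwise disjoint subsets of $C$ with union $C$; it is $w$-colourable if each $\chi(G[W_i])\le w$; $u$ is earlier than $v$ if $u\in W_i$, $v\in W_j$, $i<j$. Enumeration and grading are compatible if whenever $u$ is earlier than $v$ (in $C$), the earliest parent of $u$ is earlier than that of $v$. $N^{\rho}[v]$ is the set of vertices at $G$-distance at most $\rho$ from $v$; $\chi^{\rho}(G)=\max_v \chi(N^{\rho}[v])$ (and $0$ for the null graph). *)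

theory Defs
  imports Main
begin

definition simple_graph :: "'a set \<Rightarrow> ('a \<Rightarrow> 'a \<Rightarrow> bool) \<Rightarrow> bool" where
  "simple_graph V E \<longleftrightarrow> finite V \<and> (\<forall>x y. E x y \<longrightarrow> E y x) \<and> (\<forall>x. \<not> E x x)
     \<and> (\<forall>x y. E x y \<longrightarrow> x \<in> V \<and> y \<in> V)"

definition chromatic_number :: "('a \<Rightarrow> 'a \<Rightarrow> bool) \<Rightarrow> 'a set \<Rightarrow> nat" where
  "chromatic_number E X = (LEAST k. \<exists>f :: 'a \<Rightarrow> nat.
      (\<forall>x\<in>X. f x < k) \<and> (\<forall>x\<in>X. \<forall>y\<in>X. E x y \<longrightarrow> f x \<noteq> f y))"

definition clique_number :: "('a \<Rightarrow> 'a \<Rightarrow> bool) \<Rightarrow> 'a set \<Rightarrow> nat" where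
  "clique_number E X = Max {card K | K. K \<subseteq> X \<and> (\<forall>x\<in>K. \<forall>y\<in>K. x \<noteq> y \<longrightarrow> E x y)}"

definition covers :: "('a \<Rightarrow> 'a \<Rightarrow> bool) \<Rightarrow> 'a set \<Rightarrow> 'a set \<Rightarrow> bool" where
  "covers E B C \<longleftrightarrow> B \<inter> C = {} \<and> (\<forall>v\<in>C. \<exists>b\<in>B. E b v)"

text \<open>Enumeration of B as a distinct list bs (0-based). Index and vertex of the earliest parent.\<close>
definition earliest_parent_idx :: "('a \<Rightarrow> 'a \<Rightarrow> bool) \<Rightarrow> 'a list \<Rightarrow> 'a \<Rightarrow> nat" where
  "earliest_parent_idx E bs v = (LEAST i. i < length bs \<and> E (bs ! i) v)"

definition earliest_parent :: "('a \<Rightarrow> 'a \<Rightarrow> bool) \<Rightarrow> 'a list \<Rightarrow> 'a \<Rightarrow> 'a" where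
  "earliest_parent E bs v = bs ! earliest_parent_idx E bs v"

definition square_edge :: "('a \<Rightarrow> 'a \<Rightarrow> bool) \<Rightarrow> 'a list \<Rightarrow> 'a \<Rightarrow> 'a \<Rightarrow> bool" where
  "square_edge E bs u v \<longleftrightarrow> E u v \<and> \<not> E (earliest_parent E bs u) v \<and> \<not> E (earliest_parent E bs v) u"

definition is_grading :: "'a set list \<Rightarrow> 'a set \<Rightarrow> bool" where
  "is_grading Ws C \<longleftrightarrow> (\<forall>i<length Ws. \<forall>j<length Ws. i \<noteq> j \<longrightarrow> Ws ! i \<inter> Ws ! j = {})
     \<and> (\<Union>(set Ws)) = C"

definition grading_colourable :: "('a \<Rightarrow> 'a \<Rightarrow> bool) \<Rightarrow> 'a set list \<Rightarrow> nat \<Rightarrow> bool" where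
  "grading_colourable E Ws w \<longleftrightarrow> (\<forall>i<length Ws. chromatic_number E (Ws ! i) \<le> w)"

definition grading_earlier :: "'a set list \<Rightarrow> 'a \<Rightarrow> 'a \<Rightarrow> bool" where
  "grading_earlier Ws u v \<longleftrightarrow> (\<exists>i j. i < j \<and> j < length Ws \<and> u \<in> Ws ! i \<and> v \<in> Ws ! j)"

definition compatible :: "('a \<Rightarrow> 'a \<Rightarrow> bool) \<Rightarrow> 'a list \<Rightarrow> 'a set list \<Rightarrow> 'a set \<Rightarrow> bool" where
  "compatible E bs Ws C \<longleftrightarrow> (\<forall>u\<in>C. \<forall>v\<in>C. grading_earlier Ws u v \<longrightarrow>
      earliest_parent_idx E bs u < earliest_parent_idx E bs v)"

definition is_walk :: "('a \<Rightarrow> 'a \<Rightarrow> bool) \<Rightarrow> 'a list \<Rightarrow> bool" where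
  "is_walk E xs \<longleftrightarrow> xs \<noteq> [] \<and> (\<forall>i. Suc i < length xs \<longrightarrow> E (xs ! i) (xs ! Suc i))"

definition ball :: "('a \<Rightarrow> 'a \<Rightarrow> bool) \<Rightarrow> nat \<Rightarrow> 'a \<Rightarrow> 'a set" where
  "ball E \<rho> v = {u. \<exists>xs. is_walk E xs \<and> hd xs = v \<and> last xs = u \<and> length xs \<le> \<rho> + 1}"

definition local_chi :: "'a set \<Rightarrow> ('a \<Rightarrow> 'a \<Rightarrow> bool) \<Rightarrow> nat \<Rightarrow> nat" where
  "local_chi V E \<rho> = Max ({0} \<union> {chromatic_number E (ball E \<rho> v) | v. v \<in> V})"

definition induced_path :: "('a \<Rightarrow> 'a \<Rightarrow> bool) \<Rightarrow> 'a list \<Rightarrow> bool" where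
  "induced_path E ps \<longleftrightarrow> ps \<noteq> [] \<and> distinct ps \<and>
     (\<forall>i<length ps. \<forall>j<length ps. E (ps ! i) (ps ! j) \<longleftrightarrow> (i = Suc j \<or> j = Suc i))"

end

theory Submission
  imports Defs
begin

text \<open>Let \<kappa> = \<chi>^\<rho>(G). A configuration of strength \<theta> is a square edge p1 p2 in grades at most j
  together with a connected set Z of vertices of later grades with \<chi>(Z) > \<theta>, such that p2 has a
  neighbour in Z and p1 has none. From a configuration of strength 2 l \<kappa> an induced path p1 p2 p3 ...
  is grown into Z: each step deletes the neighbours of the current end, at a cost of at most \<kappa>, and
  passes to a connected piece of full chromatic number. After l vertices more than (l + 2) \<kappa>
  survives, so some vertex z is at distance more than \<rho> from p1, ..., pl and the two parents, and a
  shortest path through the surviving set to z completes the path.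

  Without a configuration of strength \<theta>, \<chi>(C) \<le> \<theta> + \<kappa> + w + \<kappa> \<tau>. Vertices that see a connected set of
  large chromatic number above their own grade split into classes under square edges, and each class
  lies in a 2-ball, so a \<kappa>-colouring of every class makes each colour class free of square edges.
  In such a set every clique extends by an earliest parent, so its clique number is below \<omega>(G) and
  it is \<tau>-colourable. The remaining vertices have chromatic number at most \<theta> + \<kappa> + w. The
  hypothesis on \<chi>(C) rules this case out for \<theta> = 2 l \<kappa>.\<close>

section \<open>Colourings\<close>

definition colouring :: "('a \<Rightarrow> 'a \<Rightarrow> bool) \<Rightarrow> 'a set \<Rightarrow> ('a \<Rightarrow> nat) \<Rightarrow> nat \<Rightarrow> bool" where
  "colouring E X f k \<longleftrightarrow> (\<forall>x\<in>X. f x < k) \<and> (\<forall>x\<in>X. \<forall>y\<in>X. E x y \<longrightarrow> f x \<noteq> f y)"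

lemma chromatic_number_eq_Least: "chromatic_number E X = (LEAST k. \<exists>f. colouring E X f k)"
  unfolding chromatic_number_def colouring_def by (rule refl)

lemma chromatic_number_le: "colouring E X f k \<Longrightarrow> chromatic_number E X \<le> k"
  unfolding chromatic_number_eq_Least by (rule Least_le) blast

lemma chromatic_number_empty [simp]: "chromatic_number E {} = 0"
  using chromatic_number_le[of E "{}" undefined 0] by (simp add: colouring_def)

lemma colouring_chromatic_number:
  assumes "finite X" "irreflp E"
  shows "\<exists>f. colouring E X f (chromatic_number E X)"
proof -
  obtain f :: "'a \<Rightarrow> nat" and n where f: "f ` X = {i. i < n}" "inj_on f X"
    using finite_imp_inj_to_nat_seg[OF assms(1)] by blast
  have "colouring E X f n"
    unfolding colouring_def
  proof (intro conjI ballI impI)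
    fix x assume "x \<in> X" then show "f x < n" using f(1) by blast
  next
    fix x y assume "x \<in> X" "y \<in> X" "E x y"
    then show "f x \<noteq> f y" using f(2) assms(2) by (metis inj_onD irreflpD)
  qed
  then have "\<exists>f. colouring E X f n" by blast
  then show ?thesis
    unfolding chromatic_number_eq_Least by (rule LeastI[where P = "\<lambda>k. \<exists>f. colouring E X f k"])
qed

lemma chromatic_number_pos:
  assumes "finite X" "irreflp E" "X \<noteq> {}"
  shows "0 < chromatic_number E X"
  using colouring_chromatic_number[OF assms(1,2)] assms(3) unfolding colouring_def by fastforce

lemma chromatic_number_mono:
  assumes "finite Y" "irreflp E" "X \<subseteq> Y"
  shows "chromatic_number E X \<le> chromatic_number E Y"
proof -
  obtain f where "colouring E Y f (chromatic_number E Y)"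
    using colouring_chromatic_number assms(1,2) by blast
  then have "colouring E X f (chromatic_number E Y)"
    using assms(3) unfolding colouring_def by blast
  then show ?thesis by (rule chromatic_number_le)
qed

lemma chromatic_number_Un_le:
  assumes "finite X" "finite Y" "irreflp E"
  shows "chromatic_number E (X \<union> Y) \<le> chromatic_number E X + chromatic_number E Y"
proof -
  obtain f where f: "colouring E X f (chromatic_number E X)"
    using colouring_chromatic_number assms by blast
  obtain g where g: "colouring E Y g (chromatic_number E Y)"
    using colouring_chromatic_number assms by blast
  define h where "h x = (if x \<in> X then f x else chromatic_number E X + g x)" for x
  have "colouring E (X \<union> Y) h (chromatic_number E X + chromatic_number E Y)"
    unfolding colouring_def
  proof (intro conjI ballI impI)
    fix x assume "x \<in> X \<union> Y"
    then show "h x < chromatic_number E X + chromatic_number E Y"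
      using f g unfolding colouring_def h_def by (cases "x \<in> X") auto
  next
    fix x y assume "x \<in> X \<union> Y" "y \<in> X \<union> Y" "E x y"
    then show "h x \<noteq> h y"
      using f g unfolding colouring_def h_def
      by (cases "x \<in> X"; cases "y \<in> X") (simp_all, fastforce+)
  qed
  then show ?thesis by (rule chromatic_number_le)
qed

lemma chromatic_number_Un_separated:
  assumes "finite X" "finite Y" "irreflp E" "\<forall>x\<in>X. \<forall>y\<in>Y. \<not> E x y \<and> \<not> E y x"
  shows "chromatic_number E (X \<union> Y) \<le> max (chromatic_number E X) (chromatic_number E Y)"
proof -
  obtain f where f: "colouring E X f (chromatic_number E X)"
    using colouring_chromatic_number assms by blast
  obtain g where g: "colouring E Y g (chromatic_number E Y)"
    using colouring_chromatic_number assms by blast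
  define h where "h x = (if x \<in> X then f x else g x)" for x
  have "colouring E (X \<union> Y) h (max (chromatic_number E X) (chromatic_number E Y))"
    using f g assms(4) unfolding colouring_def h_def by (auto simp: less_max_iff_disj)
  then show ?thesis by (rule chromatic_number_le)
qed

lemma chromatic_number_UN_le:
  assumes "finite I" "\<And>i. i \<in> I \<Longrightarrow> finite (X i)" "irreflp E"
    and "\<And>i. i \<in> I \<Longrightarrow> chromatic_number E (X i) \<le> k"
  shows "chromatic_number E (\<Union>i\<in>I. X i) \<le> card I * k"
  using assms(1,2,4)
proof (induction I rule: finite_induct)
  case (insert i I)
  have "chromatic_number E (\<Union>j\<in>insert i I. X j) \<le> chromatic_number E (X i) + chromatic_number E (\<Union>j\<in>I. X j)"
    using insert.prems insert.hyps(1) assms(3) by (auto intro: chromatic_number_Un_le)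
  also have "\<dots> \<le> k + card I * k"
    using insert by (intro add_mono) auto
  finally show ?case using insert.hyps by simp
qed simp

section \<open>Connected sets and induced paths\<close>

definition induced_adj :: "('a \<Rightarrow> 'a \<Rightarrow> bool) \<Rightarrow> 'a set \<Rightarrow> 'a \<Rightarrow> 'a \<Rightarrow> bool" where
  "induced_adj E X a b \<longleftrightarrow> a \<in> X \<and> b \<in> X \<and> E a b"

definition connected_set :: "('a \<Rightarrow> 'a \<Rightarrow> bool) \<Rightarrow> 'a set \<Rightarrow> bool" where
  "connected_set E X \<longleftrightarrow> X \<noteq> {} \<and> (\<forall>x\<in>X. \<forall>y\<in>X. (induced_adj E X)\<^sup>*\<^sup>* x y)"

definition component :: "('a \<Rightarrow> 'a \<Rightarrow> bool) \<Rightarrow> 'a set \<Rightarrow> 'a \<Rightarrow> 'a set" where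
  "component E X x = {y. (induced_adj E X)\<^sup>*\<^sup>* x y}"

definition has_neighbour_in :: "('a \<Rightarrow> 'a \<Rightarrow> bool) \<Rightarrow> 'a \<Rightarrow> 'a set \<Rightarrow> bool" where
  "has_neighbour_in E x Y \<longleftrightarrow> (\<exists>y\<in>Y. E x y)"

lemma symp_induced_adj: "symp E \<Longrightarrow> symp (induced_adj E X)"
  unfolding induced_adj_def symp_def by blast

lemma induced_adj_reach_sym:
  "symp E \<Longrightarrow> (induced_adj E X)\<^sup>*\<^sup>* a b \<Longrightarrow> (induced_adj E X)\<^sup>*\<^sup>* b a"
  by (rule sympD[OF symp_rtranclp[OF symp_induced_adj]])

lemma induced_adj_reach_mono:
  assumes "X \<subseteq> Y" "(induced_adj E X)\<^sup>*\<^sup>* a b"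
  shows "(induced_adj E Y)\<^sup>*\<^sup>* a b"
proof -
  have "induced_adj E X \<le> induced_adj E Y" using assms(1) unfolding induced_adj_def by auto
  then show ?thesis using assms(2) rtranclp_mono by blast
qed

lemma induced_adj_reach_mem: "(induced_adj E X)\<^sup>*\<^sup>* a b \<Longrightarrow> a \<in> X \<Longrightarrow> b \<in> X"
  by (induction rule: rtranclp_induct) (auto simp: induced_adj_def)

lemma connected_set_nonempty: "connected_set E X \<Longrightarrow> X \<noteq> {}"
  unfolding connected_set_def by blast

lemma connected_set_edge_into:
  assumes "symp E" "connected_set E D" "Y \<subseteq> D" "Y \<noteq> {}" "Y \<noteq> D"
  shows "\<exists>x\<in>D - Y. \<exists>y\<in>Y. E x y"
proof -
  obtain a c where a: "a \<in> Y" and c: "c \<in> D" "c \<notin> Y" using assms(3-5) by blast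
  have "(induced_adj E D)\<^sup>*\<^sup>* a c" using assms(2,3) a c unfolding connected_set_def by blast
  then have "c \<notin> Y \<longrightarrow> (\<exists>x\<in>D - Y. \<exists>y\<in>Y. E x y)"
  proof (induction rule: rtranclp_induct)
    case (step y z)
    then show ?case using sympD[OF assms(1)] unfolding induced_adj_def by (metis DiffI)
  qed (use a in blast)
  then show ?thesis using c by blast
qed

lemma connected_set_insert:
  assumes "symp E" "connected_set E Y" "y \<in> Y" "E x y"
  shows "connected_set E (insert x Y)"
proof -
  let ?S = "insert x Y"
  have reach: "(induced_adj E ?S)\<^sup>*\<^sup>* x z" if "z \<in> ?S" for z
  proof (cases "z = x")
    case False
    then have "(induced_adj E Y)\<^sup>*\<^sup>* y z" using assms(2,3) that unfolding connected_set_def by blast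
    then have "(induced_adj E ?S)\<^sup>*\<^sup>* y z" by (rule induced_adj_reach_mono[rotated]) blast
    moreover have "induced_adj E ?S x y" using assms(3,4) unfolding induced_adj_def by blast
    ultimately show ?thesis by (rule converse_rtranclp_into_rtranclp[rotated])
  qed simp
  show ?thesis
    unfolding connected_set_def
  proof (intro conjI ballI)
    fix a b assume "a \<in> ?S" "b \<in> ?S"
    then show "(induced_adj E ?S)\<^sup>*\<^sup>* a b"
      using reach induced_adj_reach_sym[OF assms(1)] by (metis rtranclp_trans)
  qed simp
qed

lemma component_subset: "x \<in> X \<Longrightarrow> component E X x \<subseteq> X"
  unfolding component_def using induced_adj_reach_mem by fast

lemma mem_component_self: "x \<in> component E X x"
  unfolding component_def by simp

lemma component_no_edge_out:
  assumes "symp E" "x \<in> X" "y \<in> component E X x" "z \<in> X - component E X x"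
  shows "\<not> E z y"
proof
  assume "E z y"
  then have "E y z" by (rule sympD[OF assms(1)])
  moreover have "y \<in> X" using component_subset[OF assms(2)] assms(3) by blast
  ultimately have "induced_adj E X y z" using assms(4) unfolding induced_adj_def by blast
  then have "(induced_adj E X)\<^sup>*\<^sup>* x z"
    using assms(3) unfolding component_def by (simp add: rtranclp.rtrancl_into_rtrancl)
  then show False using assms(4) unfolding component_def by blast
qed

lemma connected_set_component:
  assumes "symp E"
  shows "connected_set E (component E X x)"
proof -
  let ?K = "component E X x"
  have within: "(induced_adj E ?K)\<^sup>*\<^sup>* x y" if "y \<in> ?K" for y
  proof -
    have "(induced_adj E X)\<^sup>*\<^sup>* x y" using that unfolding component_def by simp
    then show ?thesis
    proof (induction rule: rtranclp_induct)
      case (step y z)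
      then have "y \<in> ?K" "z \<in> ?K" "E y z"
        unfolding component_def induced_adj_def by (auto intro: rtranclp.rtrancl_into_rtrancl)
      then have "induced_adj E ?K y z" unfolding induced_adj_def by blast
      with step.IH show ?case by (rule rtranclp.rtrancl_into_rtrancl)
    qed simp
  qed
  show ?thesis
    unfolding connected_set_def
  proof (intro conjI ballI)
    fix a b assume "a \<in> ?K" "b \<in> ?K"
    then show "(induced_adj E ?K)\<^sup>*\<^sup>* a b"
      using within induced_adj_reach_sym[OF assms] by (metis rtranclp_trans)
  qed (use mem_component_self[of x E X] in blast)
qed

lemma component_of_full_chromatic_number:
  assumes "symp E" "irreflp E" "finite X" "X \<noteq> {}"
  shows "\<exists>Y\<subseteq>X. connected_set E Y \<and> (\<forall>y\<in>Y. \<forall>x\<in>X - Y. \<not> E x y)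
    \<and> chromatic_number E Y = chromatic_number E X"
  using assms(3,4)
proof (induction "card X" arbitrary: X rule: less_induct)
  case less
  obtain x where x: "x \<in> X" using less.prems by blast
  let ?K = "component E X x"
  have K: "?K \<subseteq> X" "connected_set E ?K" "\<forall>y\<in>?K. \<forall>z\<in>X - ?K. \<not> E z y"
    using component_subset[OF x] connected_set_component[OF assms(1)]
      component_no_edge_out[OF assms(1) x] by blast+
  have fin: "finite ?K" "finite (X - ?K)" using K(1) less.prems(1) by (auto intro: finite_subset)
  have "chromatic_number E X = chromatic_number E (?K \<union> (X - ?K))" using K(1) by (simp add: Un_absorb1)
  also have "\<dots> \<le> max (chromatic_number E ?K) (chromatic_number E (X - ?K))"
    using K(3) assms(1) unfolding symp_def by (intro chromatic_number_Un_separated[OF fin assms(2)]) blast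
  finally have le: "chromatic_number E X \<le> max (chromatic_number E ?K) (chromatic_number E (X - ?K))" .
  have mono: "chromatic_number E Y \<le> chromatic_number E X" if "Y \<subseteq> X" for Y
    using chromatic_number_mono[OF less.prems(1) assms(2) that] .
  show ?case
  proof (cases "chromatic_number E (X - ?K) \<le> chromatic_number E ?K")
    case True
    then have "chromatic_number E ?K = chromatic_number E X" using le mono[OF K(1)] by linarith
    then show ?thesis using K by blast
  next
    case False
    then have ne: "X - ?K \<noteq> {}" by (intro notI) simp
    have "X - ?K \<subset> X" using mem_component_self[of x E X] x by blast
    then have lt: "card (X - ?K) < card X" using less.prems(1) by (simp add: psubset_card_mono)
    then obtain Y where Y: "Y \<subseteq> X - ?K" "connected_set E Y" "\<forall>y\<in>Y. \<forall>z\<in>(X - ?K) - Y. \<not> E z y"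
        "chromatic_number E Y = chromatic_number E (X - ?K)"
      using less.hyps[OF lt fin(2) ne] by blast
    have "chromatic_number E Y = chromatic_number E X" using Y(4) le False mono[of "X - ?K"] by simp
    moreover have "\<forall>y\<in>Y. \<forall>z\<in>X - Y. \<not> E z y"
      using Y(1,3) K(3) assms(1) unfolding symp_def by blast
    ultimately show ?thesis using Y(1,2) by blast
  qed
qed

lemma walk_of_reach:
  assumes "(induced_adj E S)\<^sup>*\<^sup>* a z" "a \<in> S"
  shows "\<exists>xs. is_walk E xs \<and> hd xs = a \<and> last xs = z \<and> set xs \<subseteq> S"
  using assms(1)
proof (induction rule: rtranclp_induct)
  case base
  have "is_walk E [a]" unfolding is_walk_def by simp
  then show ?case using assms(2) by fastforce
next
  case (step y z)
  then obtain xs where xs: "is_walk E xs" "hd xs = a" "last xs = y" "set xs \<subseteq> S" by blast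
  have yz: "E y z" "z \<in> S" using step(2) unfolding induced_adj_def by auto
  have "xs \<noteq> []" using xs(1) unfolding is_walk_def by blast
  have "is_walk E (xs @ [z])"
    unfolding is_walk_def
  proof (intro conjI allI impI)
    fix i assume i: "Suc i < length (xs @ [z])"
    show "E ((xs @ [z]) ! i) ((xs @ [z]) ! Suc i)"
    proof (cases "Suc i < length xs")
      case True
      then show ?thesis using xs(1) unfolding is_walk_def by (simp add: nth_append)
    next
      case False
      then have "i = length xs - 1" using i by simp
      then show ?thesis using yz(1) xs(3) \<open>xs \<noteq> []\<close> by (simp add: nth_append last_conv_nth)
    qed
  qed simp
  then show ?case using xs yz \<open>xs \<noteq> []\<close> by (intro exI[of _ "xs @ [z]"]) auto
qed

lemma walk_shortcut:
  assumes "is_walk E xs" "0 < k" "k \<le> m" "m < length xs" "E (xs ! (k - 1)) (xs ! m)"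
  shows "is_walk E (take k xs @ drop m xs)"
proof -
  let ?ys = "take k xs @ drop m xs"
  have lk: "length (take k xs) = k" using assms(3,4) by simp
  show ?thesis unfolding is_walk_def
  proof (intro conjI allI impI)
    show "?ys \<noteq> []" using assms(2,4) by simp
  next
    fix i assume i: "Suc i < length ?ys"
    consider "Suc i < k" | "Suc i = k" | "Suc i > k" by linarith
    then show "E (?ys ! i) (?ys ! Suc i)"
    proof cases
      case 1
      then show ?thesis using assms(1,3,4) lk unfolding is_walk_def by (simp add: nth_append)
    next
      case 2
      then show ?thesis using assms(3-5) lk by (auto simp: nth_append)
    next
      case 3
      then have "?ys ! i = xs ! (m + (i - k))" "?ys ! Suc i = xs ! Suc (m + (i - k))"
        using lk assms(3,4) i by (auto simp: nth_append Suc_diff_le)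
      moreover have "Suc (m + (i - k)) < length xs" using i 3 assms(3,4) by simp
      ultimately show ?thesis using assms(1) unfolding is_walk_def by simp
    qed
  qed
qed

text \<open>A repeated vertex or a chord would give a shorter walk with the same ends inside S.\<close>
lemma induced_path_if_shortest_walk:
  assumes "symp E" "irreflp E"
    and walk: "is_walk E xs" "hd xs = a" "last xs = z" "set xs \<subseteq> S"
    and shortest: "\<And>ys. is_walk E ys \<Longrightarrow> hd ys = a \<Longrightarrow> last ys = z \<Longrightarrow> set ys \<subseteq> S
      \<Longrightarrow> length xs \<le> length ys"
  shows "induced_path E xs"
proof -
  have ne: "xs \<noteq> []" using walk(1) unfolding is_walk_def by blast
  have no_shortcut: "\<not> E (xs ! (k - 1)) (xs ! m)" if "0 < k" "k < m" "m < length xs" for k m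
  proof
    assume e: "E (xs ! (k - 1)) (xs ! m)"
    let ?ys = "take k xs @ drop m xs"
    have "is_walk E ?ys" using walk_shortcut[OF walk(1) that(1) _ that(3) e] that(2) by simp
    moreover have "hd ?ys = a" "last ?ys = z" "set ?ys \<subseteq> S"
      using that walk(2-4) ne set_take_subset[of k xs] set_drop_subset[of m xs]
      by (auto simp: hd_append hd_conv_nth)
    ultimately have "length xs \<le> length ?ys" by (rule shortest)
    then show False using that by simp
  qed
  have chord: "j = Suc i" if "i < j" "j < length xs" "E (xs ! i) (xs ! j)" for i j
    using no_shortcut[of "Suc i" j] that by (cases "j = Suc i") auto
  have dist: "xs ! i \<noteq> xs ! j" if "i < j" "j < length xs" for i j
  proof
    assume eq: "xs ! i = xs ! j"
    show False
    proof (cases "i = 0")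
      case True
      have "is_walk E (drop j xs)" using walk(1) that unfolding is_walk_def by auto
      moreover have "hd (drop j xs) = a" "last (drop j xs) = z" "set (drop j xs) \<subseteq> S"
        using that eq True walk(2-4) ne set_drop_subset[of j xs]
        by (auto simp: hd_drop_conv_nth hd_conv_nth)
      ultimately have "length xs \<le> length (drop j xs)" by (rule shortest)
      then show False using that by simp
    next
      case False
      moreover have "Suc (i - 1) < length xs" using that by simp
      ultimately have "E (xs ! (i - 1)) (xs ! Suc (i - 1))"
        using walk(1) unfolding is_walk_def by blast
      then have "E (xs ! (i - 1)) (xs ! j)" using eq False by simp
      then show False using no_shortcut[of i j] False that by simp
    qed
  qed
  show ?thesis unfolding induced_path_def
  proof (intro conjI allI impI)
    show "distinct xs" unfolding distinct_conv_nth using dist by (metis linorder_neqE_nat)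
  next
    fix i j assume ij: "i < length xs" "j < length xs"
    show "E (xs ! i) (xs ! j) \<longleftrightarrow> (i = Suc j \<or> j = Suc i)"
    proof
      assume "E (xs ! i) (xs ! j)"
      then show "i = Suc j \<or> j = Suc i"
        using chord ij sympD[OF assms(1)] irreflpD[OF assms(2)] by (metis linorder_neqE_nat)
    next
      assume "i = Suc j \<or> j = Suc i"
      then show "E (xs ! i) (xs ! j)" using walk(1) ij sympD[OF assms(1)] unfolding is_walk_def by auto
    qed
  qed (rule ne)
qed

lemma connected_set_induced_path:
  assumes "symp E" "irreflp E" "connected_set E S" "a \<in> S" "z \<in> S"
  obtains xs where "induced_path E xs" "hd xs = a" "last xs = z" "set xs \<subseteq> S"
proof -
  let ?W = "\<lambda>xs. is_walk E xs \<and> hd xs = a \<and> last xs = z \<and> set xs \<subseteq> S"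
  have "(induced_adj E S)\<^sup>*\<^sup>* a z" using assms(3-5) unfolding connected_set_def by blast
  then obtain xs0 where "?W xs0" using walk_of_reach[OF _ assms(4)] by blast
  then obtain xs where xs: "?W xs" and shortest: "\<forall>ys. ?W ys \<longrightarrow> length xs \<le> length ys"
    using ex_has_least_nat[of ?W xs0 length] by blast
  have "induced_path E xs"
    using xs shortest by (intro induced_path_if_shortest_walk[OF assms(1,2)]) auto
  then show ?thesis using xs that by blast
qed

lemma induced_path_pair:
  assumes "symp E" "irreflp E" "E a b"
  shows "induced_path E [a, b]"
  using assms(3) sympD[OF assms(1)] irreflpD[OF assms(2)]
  unfolding induced_path_def by (auto simp: less_2_cases_iff nth_Cons')

lemma induced_path_append:
  assumes "symp E" "induced_path E qs" "induced_path E (last qs # ts)"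
    and no_chord: "\<And>i t. Suc i < length qs \<Longrightarrow> t \<in> set ts \<Longrightarrow> \<not> E (qs ! i) t"
    and disjoint: "set qs \<inter> set ts = {}"
  shows "induced_path E (qs @ ts)"
proof -
  let ?n = "length qs" and ?q = "last qs # ts" and ?p = "qs @ ts"
  have ne: "qs \<noteq> []" using assms(2) unfolding induced_path_def by blast
  then have n1: "?n \<ge> 1" by (cases qs) auto
  have tail: "?p ! k = ?q ! (k - (?n - 1))" if "k \<ge> ?n - 1" for k
  proof (cases "k = ?n - 1")
    case True
    then show ?thesis using ne n1 by (simp add: nth_append last_conv_nth)
  next
    case False
    then have "k \<ge> ?n" "k - (?n - 1) = Suc (k - ?n)" using that n1 by auto
    then show ?thesis by (simp add: nth_append)
  qed
  have Q: "\<forall>i<?n. \<forall>j<?n. E (qs ! i) (qs ! j) \<longleftrightarrow> (i = Suc j \<or> j = Suc i)"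
    using assms(2) unfolding induced_path_def by blast
  have T: "\<forall>i<length ?q. \<forall>j<length ?q. E (?q ! i) (?q ! j) \<longleftrightarrow> (i = Suc j \<or> j = Suc i)"
    using assms(3) unfolding induced_path_def by blast
  have cross: "\<not> E (?p ! i) (?p ! j)" if "i < ?n - 1" "?n \<le> j" "j < length ?p" for i j
  proof -
    have "?p ! i = qs ! i" "?p ! j = ts ! (j - ?n)" using that by (auto simp: nth_append)
    moreover have "ts ! (j - ?n) \<in> set ts" using that by simp
    ultimately show ?thesis using no_chord[of i] that by simp
  qed
  show ?thesis unfolding induced_path_def
  proof (intro conjI allI impI)
    show "?p \<noteq> []" using ne by simp
    show "distinct ?p" using assms(2,3) disjoint unfolding induced_path_def by simp
  next
    fix i j assume ij: "i < length ?p" "j < length ?p"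
    consider "i < ?n" "j < ?n" | "i \<ge> ?n - 1" "j \<ge> ?n - 1" | "i < ?n - 1" "j \<ge> ?n"
      | "j < ?n - 1" "i \<ge> ?n" by linarith
    then show "E (?p ! i) (?p ! j) \<longleftrightarrow> (i = Suc j \<or> j = Suc i)"
    proof cases
      case 1
      then show ?thesis using Q by (simp add: nth_append)
    next
      case 2
      then have "i - (?n - 1) < length ?q" "j - (?n - 1) < length ?q" using ij n1 by auto
      moreover have "(i - (?n - 1) = Suc (j - (?n - 1)) \<or> j - (?n - 1) = Suc (i - (?n - 1)))
          \<longleftrightarrow> (i = Suc j \<or> j = Suc i)" using 2 n1 by auto
      ultimately show ?thesis using T tail 2 by simp
    next
      case 3
      then show ?thesis using cross ij by auto
    next
      case 4
      then show ?thesis using cross[of j i] ij assms(1) unfolding symp_def by auto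
    qed
  qed
qed

definition induced_path_into :: "('a \<Rightarrow> 'a \<Rightarrow> bool) \<Rightarrow> 'a list \<Rightarrow> 'a set \<Rightarrow> bool" where
  "induced_path_into E qs Z \<longleftrightarrow> induced_path E qs \<and> connected_set E Z \<and> set qs \<inter> Z = {}
     \<and> has_neighbour_in E (last qs) Z \<and> (\<forall>i. Suc i < length qs \<longrightarrow> \<not> has_neighbour_in E (qs ! i) Z)"

lemma induced_path_into_extend_to:
  assumes "symp E" "irreflp E" "induced_path_into E qs Z" "z \<in> Z"
  obtains ts where "ts \<noteq> []" "set ts \<subseteq> Z" "last ts = z" "induced_path E (qs @ ts)"
proof -
  let ?a = "last qs"
  have qs: "induced_path E qs" "connected_set E Z" "set qs \<inter> Z = {}" "has_neighbour_in E ?a Z"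
    "\<And>i. Suc i < length qs \<Longrightarrow> \<not> has_neighbour_in E (qs ! i) Z"
    using assms(3) unfolding induced_path_into_def by blast+
  have "qs \<noteq> []" using qs(1) unfolding induced_path_def by blast
  then have aZ: "?a \<notin> Z" using qs(3) last_in_set[of qs] by blast
  obtain y where "y \<in> Z" "E ?a y" using qs(4) unfolding has_neighbour_in_def by blast
  then have "connected_set E (insert ?a Z)" by (intro connected_set_insert[OF assms(1) qs(2)])
  then obtain xs where xs: "induced_path E xs" "hd xs = ?a" "last xs = z" "set xs \<subseteq> insert ?a Z"
    using connected_set_induced_path[OF assms(1,2)] assms(4) by blast
  have xs_eq: "xs = ?a # tl xs" using xs(1,2) unfolding induced_path_def by (metis list.collapse)
  let ?ts = "tl xs"
  have "?ts \<noteq> []" using xs(3) xs_eq aZ assms(4) by (metis last_ConsL)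
  moreover have tsZ: "set ?ts \<subseteq> Z"
  proof -
    have "distinct (?a # ?ts)" using xs(1) xs_eq unfolding induced_path_def by metis
    moreover have "set (?a # ?ts) \<subseteq> insert ?a Z" using xs(4) xs_eq by metis
    ultimately show ?thesis by auto
  qed
  moreover have "last ?ts = z" using xs(3) xs_eq \<open>?ts \<noteq> []\<close> by (metis last_ConsR)
  moreover have "induced_path E (qs @ ?ts)"
  proof (rule induced_path_append[OF assms(1) qs(1)])
    show "induced_path E (last qs # tl xs)" using xs(1) xs_eq by simp
    show "\<not> E (qs ! i) t" if "Suc i < length qs" "t \<in> set ?ts" for i t
      using qs(5)[OF that(1)] tsZ that(2) unfolding has_neighbour_in_def by blast
    show "set qs \<inter> set ?ts = {}" using tsZ qs(3) by blast
  qed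
  ultimately show ?thesis using that by blast
qed

text \<open>Take a component Y of Z minus the neighbours of the last vertex, of the same chromatic number;
  since Z is connected, Y is reached through some neighbour y of the last vertex.\<close>
lemma induced_path_into_step:
  assumes "symp E" "irreflp E" "induced_path_into E qs Z" "finite Z"
    and big: "M < chromatic_number E (Z - {y. E (last qs) y})"
  obtains y Y where "y \<in> Z" "Y \<subseteq> Z" "induced_path_into E (qs @ [y]) Y" "M < chromatic_number E Y"
proof -
  let ?a = "last qs" and ?Z1 = "Z - {y. E (last qs) y}"
  have qs: "induced_path E qs" "connected_set E Z" "set qs \<inter> Z = {}" "has_neighbour_in E ?a Z"
    "\<And>i. Suc i < length qs \<Longrightarrow> \<not> has_neighbour_in E (qs ! i) Z"
    using assms(3) unfolding induced_path_into_def by blast+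
  have ne: "qs \<noteq> []" using qs(1) unfolding induced_path_def by blast
  have "?Z1 \<noteq> {}" using big by (intro notI) simp
  then obtain Y where Y: "Y \<subseteq> ?Z1" "connected_set E Y" "\<forall>y\<in>Y. \<forall>x\<in>?Z1 - Y. \<not> E x y"
      "chromatic_number E Y = chromatic_number E ?Z1"
    using component_of_full_chromatic_number[OF assms(1,2)] assms(4) by (metis finite_Diff)
  have "Y \<noteq> Z" using qs(4) Y(1) unfolding has_neighbour_in_def by blast
  then obtain y y' where yy: "y \<in> Z - Y" "y' \<in> Y" "E y y'"
    using connected_set_edge_into[OF assms(1) qs(2) _ connected_set_nonempty[OF Y(2)]] Y(1) by blast
  have ay: "E ?a y" using Y(3) yy by blast
  have path: "induced_path E (qs @ [y])"
  proof (rule induced_path_append[OF assms(1) qs(1)])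
    show "induced_path E [last qs, y]" by (rule induced_path_pair[OF assms(1,2) ay])
    show "\<not> E (qs ! i) t" if "Suc i < length qs" "t \<in> set [y]" for i t
      using qs(5)[OF that(1)] yy(1) that(2) unfolding has_neighbour_in_def by auto
    show "set qs \<inter> set [y] = {}" using yy(1) qs(3) by auto
  qed
  have "\<not> has_neighbour_in E ((qs @ [y]) ! i) Y" if "Suc i < length (qs @ [y])" for i
  proof (cases "Suc i < length qs")
    case True
    then show ?thesis using qs(5)[OF True] Y(1) unfolding has_neighbour_in_def by (auto simp: nth_append)
  next
    case False
    then have "i = length qs - 1" using that by simp
    then have "(qs @ [y]) ! i = ?a" using ne by (simp add: nth_append last_conv_nth)
    then show ?thesis using Y(1) unfolding has_neighbour_in_def by auto
  qed
  moreover have "set (qs @ [y]) \<inter> Y = {}" using qs(3) Y(1) yy(1) by auto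
  moreover have "has_neighbour_in E (last (qs @ [y])) Y" using yy unfolding has_neighbour_in_def by auto
  ultimately have "induced_path_into E (qs @ [y]) Y"
    using path Y(2) unfolding induced_path_into_def by blast
  moreover have "Y \<subseteq> Z" "M < chromatic_number E Y" using Y(1,4) big by auto
  ultimately show ?thesis using that yy(1) by blast
qed

section \<open>Finite simple graphs and balls\<close>

lemma neighbour_mem_ball: "1 \<le> \<rho> \<Longrightarrow> E v y \<Longrightarrow> y \<in> ball E \<rho> v"
  unfolding ball_def is_walk_def by (intro CollectI exI[of _ "[v, y]"]) (auto simp: nth_Cons')

lemma two_step_mem_ball: "2 \<le> \<rho> \<Longrightarrow> E v x \<Longrightarrow> E x y \<Longrightarrow> y \<in> ball E \<rho> v"
  unfolding ball_def is_walk_def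
  by (intro CollectI exI[of _ "[v, x, y]"]) (auto simp: nth_Cons' less_Suc_eq)

lemma chromatic_number_ball_le_local_chi:
  "finite V \<Longrightarrow> v \<in> V \<Longrightarrow> chromatic_number E (ball E \<rho> v) \<le> local_chi V E \<rho>"
  unfolding local_chi_def by (rule Max_ge) auto

locale graph =
  fixes V :: "'a set" and E :: "'a \<Rightarrow> 'a \<Rightarrow> bool"
  assumes simple_graph: "simple_graph V E"
begin

lemma finite_V: "finite V"
  using simple_graph unfolding simple_graph_def by blast

lemma symp_E: "symp E"
  using simple_graph unfolding simple_graph_def symp_def by blast

lemma irreflp_E: "irreflp E"
  using simple_graph unfolding simple_graph_def irreflp_def by blast

lemma adjacent_in_V: "E x y \<Longrightarrow> x \<in> V \<and> y \<in> V"
  using simple_graph unfolding simple_graph_def by blast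

lemma finite_if_subset_V: "X \<subseteq> V \<Longrightarrow> finite X"
  using finite_V finite_subset by blast

lemma chromatic_number_mono_V:
  "X \<subseteq> Y \<Longrightarrow> Y \<subseteq> V \<Longrightarrow> chromatic_number E X \<le> chromatic_number E Y"
  by (rule chromatic_number_mono[OF finite_if_subset_V irreflp_E])

lemma chromatic_number_Un_le_V:
  "X \<subseteq> V \<Longrightarrow> Y \<subseteq> V \<Longrightarrow> chromatic_number E (X \<union> Y) \<le> chromatic_number E X + chromatic_number E Y"
  by (rule chromatic_number_Un_le[OF finite_if_subset_V finite_if_subset_V irreflp_E])

lemma chromatic_number_Diff_Int_le:
  assumes "Z \<subseteq> V"
  shows "chromatic_number E Z \<le> chromatic_number E (Z - A) + chromatic_number E (Z \<inter> A)"
proof -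
  have "Z - A \<subseteq> V" "Z \<inter> A \<subseteq> V" using assms by auto
  from chromatic_number_Un_le_V[OF this] show ?thesis by (simp add: Un_Diff_Int)
qed

lemma ball_subset_V:
  assumes "v \<in> V"
  shows "ball E \<rho> v \<subseteq> V"
proof
  fix u assume "u \<in> ball E \<rho> v"
  then obtain xs where xs: "is_walk E xs" "hd xs = v" "last xs = u" unfolding ball_def by blast
  then have ne: "xs \<noteq> []" unfolding is_walk_def by blast
  show "u \<in> V"
  proof (cases "length xs = 1")
    case True
    then have "last xs = hd xs" using ne by (simp add: last_conv_nth hd_conv_nth)
    then show ?thesis using xs(2,3) assms by simp
  next
    case False
    then have "2 \<le> length xs" using ne by (cases "length xs") auto
    then have "Suc (length xs - 2) < length xs" "Suc (length xs - 2) = length xs - 1" by linarith+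
    then have "E (xs ! (length xs - 2)) (xs ! (length xs - 1))"
      using xs(1) unfolding is_walk_def by (metis (no_types))
    then show ?thesis using xs(3) ne adjacent_in_V by (simp add: last_conv_nth)
  qed
qed

lemma chromatic_number_le_local_chi:
  assumes "v \<in> V" "Z \<subseteq> ball E \<rho> v"
  shows "chromatic_number E Z \<le> local_chi V E \<rho>"
proof -
  have "chromatic_number E Z \<le> chromatic_number E (ball E \<rho> v)"
    using assms by (intro chromatic_number_mono_V ball_subset_V)
  also have "\<dots> \<le> local_chi V E \<rho>"
    by (rule chromatic_number_ball_le_local_chi[OF finite_V assms(1)])
  finally show ?thesis .
qed

lemma chromatic_number_neighbours_le:
  assumes "1 \<le> \<rho>" "v \<in> V"
  shows "chromatic_number E {y. E v y} \<le> local_chi V E \<rho>"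
  using assms neighbour_mem_ball by (intro chromatic_number_le_local_chi) auto

lemma exists_far_vertex:
  assumes "finite F" "F \<subseteq> V" "Z \<subseteq> V" "card F * local_chi V E \<rho> < chromatic_number E Z"
  obtains z where "z \<in> Z" "\<forall>f\<in>F. z \<notin> ball E \<rho> f"
proof -
  let ?U = "\<Union>f\<in>F. Z \<inter> ball E \<rho> f"
  have "chromatic_number E ?U \<le> card F * local_chi V E \<rho>"
  proof (rule chromatic_number_UN_le[OF assms(1) _ irreflp_E])
    fix f assume "f \<in> F"
    then show "finite (Z \<inter> ball E \<rho> f)" using assms(3) finite_if_subset_V by blast
    show "chromatic_number E (Z \<inter> ball E \<rho> f) \<le> local_chi V E \<rho>"
      using \<open>f \<in> F\<close> assms(2) by (intro chromatic_number_le_local_chi) auto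
  qed
  then have "Z \<noteq> ?U" using assms(4) by auto
  then show ?thesis using that by blast
qed

lemma chromatic_number_le_Diff_neighbours:
  assumes "chromatic_number E {y. E v y} \<le> k" "Z \<subseteq> V"
  shows "chromatic_number E Z \<le> chromatic_number E (Z - {y. E v y}) + k"
proof -
  have "chromatic_number E (Z \<inter> {y. E v y}) \<le> chromatic_number E {y. E v y}"
    using adjacent_in_V by (intro chromatic_number_mono_V) auto
  then show ?thesis using chromatic_number_Diff_Int_le[OF assms(2), of "{y. E v y}"] assms(1) by linarith
qed

lemma induced_path_into_grow:
  assumes "induced_path_into E qs Z" "Z \<subseteq> V"
    and nbhd: "\<And>v. v \<in> V \<Longrightarrow> chromatic_number E {y. E v y} \<le> k"
  shows "s * k + M < chromatic_number E Z \<Longrightarrow> \<exists>rest Z'. length rest = s \<and> set rest \<subseteq> Z \<and> Z' \<subseteq> Z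
    \<and> induced_path_into E (qs @ rest) Z' \<and> M < chromatic_number E Z'"
proof (induction s arbitrary: M)
  case 0
  then show ?case using assms(1) by (intro exI[of _ "[]"] exI[of _ Z]) simp
next
  case (Suc s)
  have "s * k + (k + M) < chromatic_number E Z" using Suc.prems by (simp add: algebra_simps)
  then obtain rest Z' where R: "length rest = s" "set rest \<subseteq> Z" "Z' \<subseteq> Z"
      "induced_path_into E (qs @ rest) Z'" "k + M < chromatic_number E Z'"
    using Suc.IH by blast
  let ?a = "last (qs @ rest)"
  have "has_neighbour_in E ?a Z'" using R(4) unfolding induced_path_into_def by blast
  then have "?a \<in> V" using adjacent_in_V unfolding has_neighbour_in_def by blast
  have Z'V: "Z' \<subseteq> V" using R(3) assms(2) by blast
  have "chromatic_number E Z' \<le> chromatic_number E (Z' - {y. E ?a y}) + k"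
    by (rule chromatic_number_le_Diff_neighbours[OF nbhd[OF \<open>?a \<in> V\<close>] Z'V])
  then have "M < chromatic_number E (Z' - {y. E ?a y})" using R(5) by linarith
  then obtain y Y where S: "y \<in> Z'" "Y \<subseteq> Z'" "induced_path_into E ((qs @ rest) @ [y]) Y"
      "M < chromatic_number E Y"
    using induced_path_into_step[OF symp_E irreflp_E R(4) finite_if_subset_V[OF Z'V]] by blast
  show ?case
    using R S by (intro exI[of _ "rest @ [y]"] exI[of _ Y]) auto
qed

end

section \<open>Cliques and square edges\<close>

definition clique :: "('a \<Rightarrow> 'a \<Rightarrow> bool) \<Rightarrow> 'a set \<Rightarrow> bool" where
  "clique E K \<longleftrightarrow> (\<forall>x\<in>K. \<forall>y\<in>K. x \<noteq> y \<longrightarrow> E x y)"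

lemma finite_clique_cards: "finite X \<Longrightarrow> finite {card K | K. K \<subseteq> X \<and> clique E K}"
  by (rule finite_subset[of _ "card ` Pow X"]) auto

lemma card_le_clique_number:
  assumes "finite X" "K \<subseteq> X" "clique E K"
  shows "card K \<le> clique_number E X"
  unfolding clique_number_def clique_def[symmetric]
  using assms by (intro Max_ge[OF finite_clique_cards]) auto

lemma clique_number_attained:
  assumes "finite X"
  obtains K where "K \<subseteq> X" "clique E K" "card K = clique_number E X"
proof -
  have "0 \<in> {card K | K. K \<subseteq> X \<and> clique E K}" unfolding clique_def by force
  then have "clique_number E X \<in> {card K | K. K \<subseteq> X \<and> clique E K}"
    unfolding clique_number_def clique_def[symmetric] using finite_clique_cards[OF assms]
    by (intro Max_in) auto
  then show ?thesis using that by auto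
qed

locale covered_graph = graph V E for V :: "'a set" and E +
  fixes B C :: "'a set" and bs :: "'a list" and \<tau> :: nat
  assumes B_subset_V: "B \<subseteq> V" and C_subset_V: "C \<subseteq> V" and covers: "covers E B C"
    and enumeration: "set bs = B"
    and \<tau>_bound: "\<forall>X\<subseteq>V. clique_number E X < clique_number E V \<longrightarrow> chromatic_number E X \<le> \<tau>"
begin

lemma earliest_parent:
  assumes "v \<in> C"
  shows "earliest_parent_idx E bs v < length bs" "E (earliest_parent E bs v) v"
proof -
  obtain b where "b \<in> B" "E b v" using covers assms unfolding covers_def by blast
  then have "\<exists>i. i < length bs \<and> E (bs ! i) v" using enumeration by (metis in_set_conv_nth)
  from LeastI_ex[OF this] show "earliest_parent_idx E bs v < length bs" "E (earliest_parent E bs v) v"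
    unfolding earliest_parent_def earliest_parent_idx_def by blast+
qed

lemma earliest_parent_idx_le: "i < length bs \<Longrightarrow> E (bs ! i) v \<Longrightarrow> earliest_parent_idx E bs v \<le> i"
  unfolding earliest_parent_idx_def by (rule Least_le) blast

lemma earliest_parent_in_B: "v \<in> C \<Longrightarrow> earliest_parent E bs v \<in> B"
  using earliest_parent enumeration unfolding earliest_parent_def by (metis nth_mem)

lemma earliest_parent_in_V: "v \<in> C \<Longrightarrow> earliest_parent E bs v \<in> V"
  using earliest_parent_in_B B_subset_V by blast

lemma square_edge_sym: "square_edge E bs u v \<Longrightarrow> square_edge E bs v u"
  using symp_E unfolding square_edge_def symp_def by blast

text \<open>Take v in K with the latest earliest parent b. For u in K, the edge uv is not square, so
  either b sees u, or the earliest parent of u sees v and then, being no earlier than b, equals b.\<close>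
lemma square_free_clique_common_parent:
  assumes "K \<subseteq> C" "clique E K" "K \<noteq> {}" and no_square: "\<forall>u\<in>K. \<forall>v\<in>K. \<not> square_edge E bs u v"
  obtains b where "b \<in> V - K" "\<forall>u\<in>K. E b u"
proof -
  have fin: "finite K" using assms(1) C_subset_V finite_if_subset_V by blast
  obtain v where v: "v \<in> K" "Max (earliest_parent_idx E bs ` K) = earliest_parent_idx E bs v"
    using obtains_MAX[OF fin assms(3)] by blast
  have latest: "earliest_parent_idx E bs u \<le> earliest_parent_idx E bs v" if "u \<in> K" for u
    using v(2) fin that by (metis Max_ge finite_imageI imageI)
  let ?b = "earliest_parent E bs v"
  have vC: "v \<in> C" using v assms(1) by blast
  have "E ?b u" if u: "u \<in> K" for u
  proof (cases "u = v")
    case False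
    have uC: "u \<in> C" using u assms(1) by blast
    have "E u v" using assms(2) u v False unfolding clique_def by blast
    then have "E (earliest_parent E bs u) v \<or> E ?b u"
      using no_square u v unfolding square_edge_def by blast
    then show ?thesis
    proof
      assume "E (earliest_parent E bs u) v"
      then have "earliest_parent_idx E bs v \<le> earliest_parent_idx E bs u"
        using earliest_parent_idx_le earliest_parent(1)[OF uC] unfolding earliest_parent_def by blast
      then have "?b = earliest_parent E bs u"
        using latest[OF u] unfolding earliest_parent_def by simp
      then show ?thesis using earliest_parent(2)[OF uC] by simp
    qed
  qed (use earliest_parent(2)[OF vC] in simp)
  moreover have "?b \<in> V - K"
    using earliest_parent_in_B[OF vC] B_subset_V assms(1) covers unfolding covers_def by blast
  ultimately show ?thesis using that by blast
qed

lemma chromatic_number_le_if_square_free: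
  assumes "X \<subseteq> C" and no_square: "\<forall>u\<in>X. \<forall>v\<in>X. \<not> square_edge E bs u v"
  shows "chromatic_number E X \<le> \<tau>"
proof (cases "X = {}")
  case False
  then obtain x where x: "x \<in> X" by blast
  have XV: "X \<subseteq> V" using assms(1) C_subset_V by blast
  have smaller: "card K < clique_number E V" if K: "K \<subseteq> X" "clique E K" for K
  proof (cases "K = {}")
    case True
    have "card {x} \<le> clique_number E V"
      using x XV by (intro card_le_clique_number[OF finite_V]) (auto simp: clique_def)
    then show ?thesis using True by simp
  next
    case False
    obtain b where b: "b \<in> V - K" "\<forall>u\<in>K. E b u"
      using square_free_clique_common_parent[of K] K no_square assms(1) False by blast
    then have "clique E (insert b K)"
      using K(2) symp_E unfolding clique_def symp_def by blast
    then have "card (insert b K) \<le> clique_number E V"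
      using b K(1) XV by (intro card_le_clique_number[OF finite_V]) auto
    then show ?thesis using b(1) finite_subset[OF K(1) finite_if_subset_V[OF XV]] by simp
  qed
  obtain K where "K \<subseteq> X" "clique E K" "card K = clique_number E X"
    using clique_number_attained[OF finite_if_subset_V[OF XV]] by blast
  then have "clique_number E X < clique_number E V" using smaller by metis
  then show ?thesis using \<tau>_bound XV by blast
qed simp

lemma \<tau>_pos: "C \<noteq> {} \<Longrightarrow> 0 < \<tau>"
proof -
  assume "C \<noteq> {}"
  then obtain v where v: "v \<in> C" by blast
  have "\<not> square_edge E bs v v" using irreflpD[OF irreflp_E] unfolding square_edge_def by blast
  then have "chromatic_number E {v} \<le> \<tau>"
    using v by (intro chromatic_number_le_if_square_free) auto
  moreover have "0 < chromatic_number E {v}"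
    using chromatic_number_pos[OF _ irreflp_E] by simp
  ultimately show ?thesis by simp
qed

end

section \<open>Grades and configurations\<close>

locale graded_cover = covered_graph V E B C bs \<tau> for V :: "'a set" and E B C bs \<tau> +
  fixes Ws :: "'a set list" and w \<rho> :: nat
  assumes grading: "is_grading Ws C" and w_colourable: "grading_colourable E Ws w"
    and two_le_\<rho>: "2 \<le> \<rho>"
begin

abbreviation \<kappa> :: nat where "\<kappa> \<equiv> local_chi V E \<rho>"

definition grade :: "'a \<Rightarrow> nat" where
  "grade x = (LEAST i. i < length Ws \<and> x \<in> Ws ! i)"

lemma grade:
  assumes "x \<in> C"
  shows "grade x < length Ws" "x \<in> Ws ! grade x"
proof -
  have "\<exists>i. i < length Ws \<and> x \<in> Ws ! i"
    using grading assms unfolding is_grading_def by (metis UnionE in_set_conv_nth)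
  from LeastI_ex[OF this] show "grade x < length Ws" "x \<in> Ws ! grade x"
    unfolding grade_def by blast+
qed

lemma grading_earlier_if_grade_less:
  "u \<in> C \<Longrightarrow> v \<in> C \<Longrightarrow> grade u < grade v \<Longrightarrow> grading_earlier Ws u v"
  unfolding grading_earlier_def using grade by blast

lemma chromatic_number_same_grade_le:
  assumes "X \<subseteq> C" "\<forall>x\<in>X. grade x = i" "i < length Ws"
  shows "chromatic_number E X \<le> w"
proof -
  have "X \<subseteq> Ws ! i"
  proof
    fix x assume "x \<in> X"
    then show "x \<in> Ws ! i" using grade(2)[of x] assms(1,2) by auto
  qed
  moreover have "Ws ! i \<subseteq> V"
    using grading assms(3) C_subset_V unfolding is_grading_def by (metis Union_upper nth_mem order_trans)
  ultimately have "chromatic_number E X \<le> chromatic_number E (Ws ! i)" by (rule chromatic_number_mono_V)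
  moreover have "chromatic_number E (Ws ! i) \<le> w"
    using w_colourable assms(3) unfolding grading_colourable_def by blast
  ultimately show ?thesis by linarith
qed

lemma w_pos: "C \<noteq> {} \<Longrightarrow> 0 < w"
proof -
  assume "C \<noteq> {}"
  then obtain v where v: "v \<in> C" by blast
  then have "chromatic_number E {v} \<le> w"
    using grade(1) by (intro chromatic_number_same_grade_le) auto
  moreover have "0 < chromatic_number E {v}"
    using chromatic_number_pos[OF _ irreflp_E] by simp
  ultimately show ?thesis by simp
qed

definition above :: "nat \<Rightarrow> 'a set" where
  "above j = {x \<in> C. j < grade x}"

lemma above_subset_C: "above j \<subseteq> C"
  unfolding above_def by blast

definition configuration :: "nat \<Rightarrow> bool" where
  "configuration \<theta> \<longleftrightarrow> (\<exists>p1 p2 j Z. p1 \<in> C \<and> p2 \<in> C \<and> square_edge E bs p1 p2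
     \<and> grade p1 \<le> j \<and> grade p2 \<le> j \<and> Z \<subseteq> above j \<and> connected_set E Z
     \<and> has_neighbour_in E p2 Z \<and> \<not> has_neighbour_in E p1 Z \<and> \<theta> < chromatic_number E Z)"

context
  fixes \<theta> :: nat
  assumes no_configuration: "\<not> configuration \<theta>"
begin

definition rich_at :: "'a \<Rightarrow> nat \<Rightarrow> bool" where
  "rich_at x j \<longleftrightarrow> (\<exists>D. D \<subseteq> above j \<and> connected_set E D \<and> has_neighbour_in E x D
     \<and> \<theta> + \<kappa> < chromatic_number E D)"

lemma rich_at_less_length: "rich_at x j \<Longrightarrow> j < length Ws"
proof -
  assume "rich_at x j"
  then obtain D where "D \<subseteq> above j" "D \<noteq> {}"
    unfolding rich_at_def using connected_set_nonempty by blast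
  then obtain z where "z \<in> C" "j < grade z" unfolding above_def by blast
  then show ?thesis using grade(1) by (meson less_trans)
qed

definition last_rich :: "'a \<Rightarrow> nat" where
  "last_rich x = (GREATEST j. rich_at x j)"

lemma last_rich:
  assumes "rich_at x j"
  shows "rich_at x (last_rich x)" "j \<le> last_rich x"
proof -
  have bound: "\<And>i. rich_at x i \<Longrightarrow> i \<le> length Ws" using rich_at_less_length less_imp_le by blast
  show "rich_at x (last_rich x)" unfolding last_rich_def by (rule GreatestI_nat[where P = "rich_at x", OF assms bound])
  show "j \<le> last_rich x" unfolding last_rich_def by (rule Greatest_le_nat[where P = "rich_at x", OF assms bound])
qed

definition Rich :: "'a set" where
  "Rich = {x \<in> C. rich_at x (grade x)}"

lemma RichD:
  assumes "x \<in> Rich"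
  shows "x \<in> C" "rich_at x (last_rich x)" "grade x \<le> last_rich x"
  using assms last_rich unfolding Rich_def by auto

lemma last_rich_eq_if_square_edge:
  assumes u: "u \<in> Rich" and v: "v \<in> Rich" and sq: "square_edge E bs u v"
  shows "last_rich u = last_rich v"
proof -
  have "\<not> last_rich u < last_rich v" if u: "u \<in> Rich" and v: "v \<in> Rich" and sq: "square_edge E bs u v"
    for u v
  proof
    assume lt: "last_rich u < last_rich v"
    obtain D where D: "D \<subseteq> above (last_rich v)" "connected_set E D" "has_neighbour_in E v D"
        "\<theta> + \<kappa> < chromatic_number E D"
      using RichD(2)[OF v] unfolding rich_at_def by blast
    have "\<not> has_neighbour_in E u D"
    proof
      assume "has_neighbour_in E u D"
      then have "rich_at u (last_rich v)" using D unfolding rich_at_def by blast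
      then show False using last_rich(2) lt by fastforce
    qed
    then have "configuration \<theta>"
      unfolding configuration_def using RichD[OF u] RichD[OF v] lt sq D
      by (intro exI[of _ u] exI[of _ v] exI[of _ "last_rich v"] exI[of _ D]) auto
    then show False using no_configuration by blast
  qed
  then show ?thesis using assms square_edge_sym by (meson linorder_neqE_nat)
qed

definition square_step :: "nat \<Rightarrow> 'a \<Rightarrow> 'a \<Rightarrow> bool" where
  "square_step t a b \<longleftrightarrow> a \<in> C \<and> b \<in> C \<and> grade a \<le> t \<and> grade b \<le> t \<and> square_edge E bs a b"

lemma square_step_reach_sym: "(square_step t)\<^sup>*\<^sup>* a b \<Longrightarrow> (square_step t)\<^sup>*\<^sup>* b a"
proof -
  have "symp (square_step t)" unfolding square_step_def symp_def using square_edge_sym by blast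
  then show "(square_step t)\<^sup>*\<^sup>* a b \<Longrightarrow> (square_step t)\<^sup>*\<^sup>* b a" by (rule sympD[OF symp_rtranclp])
qed

lemma square_step_reach_has_neighbour:
  assumes "(square_step t)\<^sup>*\<^sup>* a b" "Y \<subseteq> above t" "connected_set E Y" "\<theta> < chromatic_number E Y"
    "has_neighbour_in E a Y"
  shows "has_neighbour_in E b Y"
  using assms(1)
proof (induction rule: rtranclp_induct)
  case (step y z)
  show ?case
  proof (rule ccontr)
    assume "\<not> has_neighbour_in E z Y"
    then have "configuration \<theta>"
      unfolding configuration_def using step square_edge_sym assms(2-4) unfolding square_step_def
      by (intro exI[of _ z] exI[of _ y] exI[of _ t] exI[of _ Y]) auto
    then show False using no_configuration by blast
  qed
qed (rule assms(5))

text \<open>Delete the neighbours of x from a witness D of richness; a component Y of the rest of large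
  chromatic number is joined to x through some x' adjacent to x. Every y reachable from x by square steps
  sees insert x' Y but not Y, so it is adjacent to x'.\<close>
lemma square_step_reach_in_ball:
  assumes "x \<in> C" "rich_at x t" "(square_step t)\<^sup>*\<^sup>* x y"
  shows "y \<in> ball E \<rho> x"
proof -
  obtain D where D: "D \<subseteq> above t" "connected_set E D" "has_neighbour_in E x D"
      "\<theta> + \<kappa> < chromatic_number E D"
    using assms(2) unfolding rich_at_def by blast
  have DV: "D \<subseteq> V" using D(1) above_subset_C C_subset_V by blast
  have xV: "x \<in> V" using assms(1) C_subset_V by blast
  let ?D1 = "D - {y. E x y}"
  have "chromatic_number E D \<le> chromatic_number E ?D1 + \<kappa>"
    using two_le_\<rho> by (intro chromatic_number_le_Diff_neighbours chromatic_number_neighbours_le xV DV) simp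
  then have big: "\<theta> < chromatic_number E ?D1" using D(4) by simp
  then have "?D1 \<noteq> {}" by (intro notI) simp
  moreover have "?D1 \<subseteq> V" using DV by blast
  ultimately have "\<exists>Y\<subseteq>?D1. connected_set E Y \<and> (\<forall>y\<in>Y. \<forall>z\<in>?D1 - Y. \<not> E z y)
      \<and> chromatic_number E Y = chromatic_number E ?D1"
    by (intro component_of_full_chromatic_number[OF symp_E irreflp_E finite_if_subset_V])
  then obtain Y where Y: "Y \<subseteq> ?D1" "connected_set E Y" "\<forall>y\<in>Y. \<forall>z\<in>?D1 - Y. \<not> E z y"
      "chromatic_number E Y = chromatic_number E ?D1"
    by blast
  have "Y \<noteq> D" using D(3) Y(1) unfolding has_neighbour_in_def by blast
  then obtain x' y1 where x': "x' \<in> D - Y" "y1 \<in> Y" "E x' y1"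
    using connected_set_edge_into[OF symp_E D(2) _ connected_set_nonempty[OF Y(2)]] Y(1) by blast
  have xx': "E x x'" using Y(3) x' by blast
  let ?Y' = "insert x' Y"
  have Y'_above: "?Y' \<subseteq> above t" using x'(1) Y(1) D(1) by blast
  have "chromatic_number E Y \<le> chromatic_number E ?Y'"
    using Y'_above above_subset_C C_subset_V by (intro chromatic_number_mono_V) auto
  then have "\<theta> < chromatic_number E ?Y'" using Y(4) big by simp
  moreover have "has_neighbour_in E x ?Y'" using xx' unfolding has_neighbour_in_def by blast
  ultimately have "has_neighbour_in E y ?Y'"
    using square_step_reach_has_neighbour[OF assms(3) Y'_above connected_set_insert[OF symp_E Y(2) x'(2,3)]]
    by blast
  moreover have "\<not> has_neighbour_in E y Y"
  proof
    assume "has_neighbour_in E y Y"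
    then have "has_neighbour_in E x Y"
      using square_step_reach_has_neighbour[OF square_step_reach_sym[OF assms(3)]] Y'_above Y(2,4) big
      by simp
    then show False using Y(1) unfolding has_neighbour_in_def by blast
  qed
  ultimately have "E x' y" using symp_E unfolding has_neighbour_in_def symp_def by blast
  then show ?thesis using two_step_mem_ball[OF two_le_\<rho>, of E x x' y] xx' by blast
qed

definition square_class :: "'a \<Rightarrow> 'a set" where
  "square_class x = {y. (square_step (last_rich x))\<^sup>*\<^sup>* x y}"

definition class_colouring :: "'a \<Rightarrow> 'a \<Rightarrow> nat" where
  "class_colouring x = (SOME f. colouring E (square_class x) f \<kappa>)"

lemma colouring_class_colouring:
  assumes "x \<in> Rich"
  shows "colouring E (square_class x) (class_colouring x) \<kappa>"
proof -
  have "square_class x \<subseteq> ball E \<rho> x"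
    unfolding square_class_def using square_step_reach_in_ball RichD[OF assms] by blast
  moreover have "x \<in> V" using RichD(1)[OF assms] C_subset_V by blast
  ultimately have le: "chromatic_number E (square_class x) \<le> \<kappa>"
    and "square_class x \<subseteq> V" using chromatic_number_le_local_chi ball_subset_V by blast+
  then obtain f where "colouring E (square_class x) f (chromatic_number E (square_class x))"
    using colouring_chromatic_number[OF finite_if_subset_V irreflp_E] by blast
  then have "colouring E (square_class x) f \<kappa>" using le unfolding colouring_def by fastforce
  then show ?thesis unfolding class_colouring_def by (rule someI[where P = "\<lambda>f. colouring E (square_class x) f \<kappa>"])
qed

text \<open>Colour x in Rich by the colour it receives in its own square class; equal colours exclude
  square edges, since the ends of a square edge in Rich share their square class.\<close>
lemma chromatic_number_Rich_le: "chromatic_number E Rich \<le> \<kappa> * \<tau>"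
proof -
  let ?c = "\<lambda>x. class_colouring x x" and ?A = "\<lambda>i. {x \<in> Rich. class_colouring x x = i}"
  have c_less: "?c x < \<kappa>" if "x \<in> Rich" for x
    using colouring_class_colouring[OF that] unfolding colouring_def square_class_def by simp
  have no_square: "\<not> square_edge E bs u v" if "u \<in> Rich" "v \<in> Rich" "?c u = ?c v" for u v
  proof
    assume sq: "square_edge E bs u v"
    have "square_step (last_rich u) u v"
      unfolding square_step_def using sq RichD[OF that(1)] RichD[OF that(2)]
        last_rich_eq_if_square_edge[OF that(1,2) sq] by simp
    then have uv: "(square_step (last_rich u))\<^sup>*\<^sup>* u v" by blast
    have eq: "last_rich v = last_rich u" using last_rich_eq_if_square_edge[OF that(1,2) sq] by simp
    have "square_class u = square_class v"
    proof
      show "square_class u \<subseteq> square_class v"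
        unfolding square_class_def eq using square_step_reach_sym[OF uv] by (auto intro: rtranclp_trans)
      show "square_class v \<subseteq> square_class u"
        unfolding square_class_def eq using uv by (auto intro: rtranclp_trans)
    qed
    then have "class_colouring v = class_colouring u" unfolding class_colouring_def by simp
    moreover have "u \<in> square_class u" "v \<in> square_class u" unfolding square_class_def using uv by auto
    moreover have "E u v" using sq unfolding square_edge_def by blast
    ultimately have "?c u \<noteq> ?c v" using colouring_class_colouring[OF that(1)] unfolding colouring_def by auto
    then show False using that(3) by blast
  qed
  have "Rich = (\<Union>i\<in>{..<\<kappa>}. ?A i)" using c_less by auto
  also have "chromatic_number E \<dots> \<le> card {..<\<kappa>} * \<tau>"
  proof (rule chromatic_number_UN_le[OF _ _ irreflp_E])
    fix i
    have "?A i \<subseteq> C" unfolding Rich_def by blast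
    then show "finite (?A i)" using C_subset_V finite_if_subset_V by blast
    show "chromatic_number E (?A i) \<le> \<tau>"
      using \<open>?A i \<subseteq> C\<close> no_square by (intro chromatic_number_le_if_square_free) auto
  qed simp
  finally show ?thesis by simp
qed

text \<open>Let K be a component of C - Rich of full chromatic number and i its least grade. The part of
  K in grade i is w-colourable. The rest has chromatic number at most \<theta> + \<kappa>, for otherwise a
  component of it would be joined to a vertex x of K of grade at most i, making x rich.\<close>
lemma chromatic_number_not_Rich_le: "chromatic_number E (C - Rich) \<le> \<theta> + \<kappa> + w"
proof (cases "C - Rich = {}")
  case False
  have NV: "C - Rich \<subseteq> V" using C_subset_V by blast
  obtain K where K: "K \<subseteq> C - Rich" "connected_set E K" "\<forall>y\<in>K. \<forall>x\<in>(C - Rich) - K. \<not> E x y"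
      "chromatic_number E K = chromatic_number E (C - Rich)"
    using component_of_full_chromatic_number[OF symp_E irreflp_E finite_if_subset_V[OF NV] False] by blast
  have KC: "K \<subseteq> C" and KV: "K \<subseteq> V" using K(1) NV by auto
  have fin: "finite K" using finite_if_subset_V[OF KV] .
  obtain x0 where x0: "x0 \<in> K" "Min (grade ` K) = grade x0"
    using obtains_MIN[OF fin connected_set_nonempty[OF K(2)]] by blast
  let ?i = "grade x0"
  have least: "?i \<le> grade x" if "x \<in> K" for x
    using x0(2) fin that by (metis Min_le finite_imageI imageI)
  let ?K1 = "{x \<in> K. ?i < grade x}"
  have "chromatic_number E (K - ?K1) \<le> w"
  proof (rule chromatic_number_same_grade_le)
    show "K - ?K1 \<subseteq> C" using KC by blast
    show "\<forall>x\<in>K - ?K1. grade x = ?i" using least by fastforce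
    show "?i < length Ws" using grade(1) x0(1) KC by blast
  qed
  moreover have "chromatic_number E ?K1 \<le> \<theta> + \<kappa>"
  proof (rule ccontr)
    assume "\<not> chromatic_number E ?K1 \<le> \<theta> + \<kappa>"
    then have big: "\<theta> + \<kappa> < chromatic_number E ?K1" by simp
    then have "?K1 \<noteq> {}" by (intro notI) simp
    moreover have "?K1 \<subseteq> V" using KV by blast
    ultimately have "\<exists>Y\<subseteq>?K1. connected_set E Y \<and> (\<forall>y\<in>Y. \<forall>z\<in>?K1 - Y. \<not> E z y)
        \<and> chromatic_number E Y = chromatic_number E ?K1"
      by (intro component_of_full_chromatic_number[OF symp_E irreflp_E finite_if_subset_V])
    then obtain Y where Y: "Y \<subseteq> ?K1" "connected_set E Y" "\<forall>y\<in>Y. \<forall>z\<in>?K1 - Y. \<not> E z y"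
        "chromatic_number E Y = chromatic_number E ?K1"
      by blast
    have "Y \<noteq> K" using x0(1) Y(1) by auto
    then obtain x y where xy: "x \<in> K - Y" "y \<in> Y" "E x y"
      using connected_set_edge_into[OF symp_E K(2) _ connected_set_nonempty[OF Y(2)]] Y(1) by blast
    have "x \<notin> ?K1" using Y(3) xy by blast
    then have "grade x \<le> ?i" using xy(1) by auto
    then have "Y \<subseteq> above (grade x)" using Y(1) KC unfolding above_def by auto
    then have "rich_at x (grade x)"
      unfolding rich_at_def has_neighbour_in_def using Y(2,4) big xy(2,3) by auto
    then have "x \<in> Rich" unfolding Rich_def using xy(1) KC by blast
    then show False using xy(1) K(1) by blast
  qed
  moreover have "chromatic_number E K \<le> chromatic_number E (K - ?K1) + chromatic_number E ?K1"
    using chromatic_number_Diff_Int_le[OF KV, of ?K1] by (simp add: Int_absorb1)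
  ultimately show ?thesis using K(4) by simp
qed (simp only: chromatic_number_empty zero_le)

lemma chromatic_number_le_if_no_configuration: "chromatic_number E C \<le> \<theta> + \<kappa> + w + \<kappa> * \<tau>"
proof -
  have "chromatic_number E C \<le> chromatic_number E (C - Rich) + chromatic_number E (C \<inter> Rich)"
    by (rule chromatic_number_Diff_Int_le[OF C_subset_V])
  moreover have "C \<inter> Rich = Rich" unfolding Rich_def by blast
  ultimately show ?thesis using chromatic_number_not_Rich_le chromatic_number_Rich_le by simp
qed

end

lemma path_from_configuration:
  assumes "configuration \<theta>" "2 * l * \<kappa> \<le> \<theta>" "2 \<le> l"
  shows "\<exists>ps. induced_path E ps \<and> set ps \<subseteq> C \<and> length ps \<ge> l
     \<and> square_edge E bs (ps ! 0) (ps ! 1)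
     \<and> (\<forall>j. 2 \<le> j \<and> j < length ps \<longrightarrow>
           grading_earlier Ws (ps ! 0) (ps ! j) \<and> grading_earlier Ws (ps ! 1) (ps ! j))
     \<and> (\<forall>v \<in> {earliest_parent E bs (ps ! 0), earliest_parent E bs (ps ! 1)} \<union> set (take l ps).
           last ps \<notin> ball E \<rho> v)"
proof -
  obtain p1 p2 j Z where P: "p1 \<in> C" "p2 \<in> C" "square_edge E bs p1 p2" "grade p1 \<le> j" "grade p2 \<le> j"
      "Z \<subseteq> above j" "connected_set E Z" "has_neighbour_in E p2 Z" "\<not> has_neighbour_in E p1 Z"
      "\<theta> < chromatic_number E Z"
    using assms(1) unfolding configuration_def by blast
  have ZC: "Z \<subseteq> C" using P(6) above_subset_C by blast
  have "E p1 p2" using P(3) unfolding square_edge_def by blast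
  then have "induced_path_into E [p1, p2] Z"
    using P(4-9) induced_path_pair[OF symp_E irreflp_E] unfolding induced_path_into_def above_def
    by auto
  moreover have "(l - 2) * \<kappa> + (l + 2) * \<kappa> < chromatic_number E Z"
  proof -
    have "(l - 2) + (l + 2) = 2 * l" using assms(3) by simp
    then have "(l - 2) * \<kappa> + (l + 2) * \<kappa> = 2 * l * \<kappa>" by (metis add_mult_distrib)
    then show ?thesis using assms(2) P(10) by simp
  qed
  moreover have "\<And>v. v \<in> V \<Longrightarrow> chromatic_number E {y. E v y} \<le> \<kappa>"
    using two_le_\<rho> by (intro chromatic_number_neighbours_le) auto
  moreover have "Z \<subseteq> V" using ZC C_subset_V by blast
  ultimately obtain rest Zf where R: "length rest = l - 2" "set rest \<subseteq> Z" "Zf \<subseteq> Z"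
      "induced_path_into E ([p1, p2] @ rest) Zf" "(l + 2) * \<kappa> < chromatic_number E Zf"
    using induced_path_into_grow by blast
  let ?qs = "[p1, p2] @ rest"
  have len: "length ?qs = l" using R(1) assms(3) by simp
  let ?F = "{earliest_parent E bs p1, earliest_parent E bs p2} \<union> set ?qs"
  have "card ?F \<le> card {earliest_parent E bs p1, earliest_parent E bs p2} + card (set ?qs)"
    by (rule card_Un_le)
  also have "\<dots> \<le> l + 2"
    using card_length[of ?qs] len
    by (cases "earliest_parent E bs p1 = earliest_parent E bs p2") auto
  finally have "card ?F \<le> l + 2" .
  then have "card ?F * \<kappa> < chromatic_number E Zf" using R(5) by (meson le_less_trans mult_le_mono1)
  moreover have "?F \<subseteq> V" using earliest_parent_in_V P(1,2) R(2) ZC C_subset_V by auto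
  ultimately obtain z where z: "z \<in> Zf" "\<forall>f\<in>?F. z \<notin> ball E \<rho> f"
    using exists_far_vertex[of ?F Zf] R(3) ZC C_subset_V by blast
  obtain ts where T: "ts \<noteq> []" "set ts \<subseteq> Zf" "last ts = z" "induced_path E (?qs @ ts)"
    using induced_path_into_extend_to[OF symp_E irreflp_E R(4) z(1)] by blast
  let ?ps = "?qs @ ts"
  have later: "?ps ! k \<in> above j" if "2 \<le> k" "k < length ?ps" for k
  proof -
    have "k = Suc (Suc (k - 2))" using that(1) by simp
    then have "?ps ! k = (rest @ ts) ! (k - 2)" by (metis append_Cons append_Nil nth_Cons_Suc)
    moreover have "k - 2 < length (rest @ ts)" using that by simp
    ultimately have "?ps ! k \<in> set (rest @ ts)" by (simp only: nth_mem)
    then show ?thesis using R(2,3) T(2) P(6) by auto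
  qed
  have "grading_earlier Ws p (?ps ! k)" if "p \<in> {p1, p2}" "2 \<le> k" "k < length ?ps" for p k
    using later[OF that(2,3)] P(1,2,4,5) that(1) grading_earlier_if_grade_less
    unfolding above_def by auto
  moreover have "take l ?ps = ?qs" by (simp add: len[symmetric])
  ultimately show ?thesis
    using T P(1-3) R(2,3) ZC len z(2) by (intro exI[of _ ?ps]) auto
qed

end

lemma threshold_le:
  fixes w t l k :: nat
  assumes "0 < w" "0 < t"
  shows "2 * l * k + k + w + k * t \<le> w * t * (4 * (l + 2) * k + w)"
proof -
  have "k \<le> k * t" using assms(2) by simp
  then have "(2 * l + 1) * k \<le> (2 * l + 1) * (k * t)" by (rule mult_le_mono2)
  then have "2 * l * k + k + k * t \<le> (2 * l + 2) * (k * t)" by (simp add: algebra_simps)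
  also have "\<dots> \<le> (4 * (l + 2) * k) * t" by (simp add: algebra_simps)
  also have "\<dots> \<le> (4 * (l + 2) * k) * (w * t)" using assms(1) by simp
  finally have "2 * l * k + k + k * t \<le> (4 * (l + 2) * k) * (w * t)" .
  moreover have "w \<le> w * (w * t)" using assms by simp
  ultimately have "2 * l * k + k + w + k * t \<le> (4 * (l + 2) * k) * (w * t) + w * (w * t)"
    by linarith
  then show ?thesis by (simp add: algebra_simps)
qed

theorem mainTheorem6:
  fixes V :: "'a set" and E :: "'a \<Rightarrow> 'a \<Rightarrow> bool"
    and B C :: "'a set" and bs :: "'a list" and Ws :: "'a set list"
    and \<tau> w l \<rho> :: nat
  assumes G: "simple_graph V E"
    and BV: "B \<subseteq> V" and CV: "C \<subseteq> V"
    and cov: "covers E B C"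
    and tau: "\<forall>X\<subseteq>V. clique_number E X < clique_number E V \<longrightarrow> chromatic_number E X \<le> \<tau>"
    and enum: "distinct bs" "set bs = B"
    and grading: "is_grading Ws C"
    and compat: "compatible E bs Ws C"
    and wcol: "grading_colourable E Ws w"
    and l3: "l \<ge> 3" and r3: "\<rho> \<ge> 3"
    and big: "chromatic_number E C > w * \<tau> * (4 * (l + 2) * local_chi V E \<rho> + w)"
  shows "\<exists>ps. induced_path E ps \<and> set ps \<subseteq> C \<and> length ps \<ge> l
     \<and> square_edge E bs (ps ! 0) (ps ! 1)
     \<and> (\<forall>j. 2 \<le> j \<and> j < length ps \<longrightarrow>
           grading_earlier Ws (ps ! 0) (ps ! j) \<and> grading_earlier Ws (ps ! 1) (ps ! j))
     \<and> (\<forall>v \<in> {earliest_parent E bs (ps ! 0), earliest_parent E bs (ps ! 1)} \<union> set (take l ps).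
           last ps \<notin> ball E \<rho> v)"
proof -
  interpret graded_cover V E B C bs \<tau> Ws w \<rho>
    unfolding graded_cover_def graded_cover_axioms_def covered_graph_def covered_graph_axioms_def
      graph_def
    using G BV CV cov tau enum(2) grading wcol r3 by auto
  define \<theta> where "\<theta> = 2 * l * \<kappa>"
  have "C \<noteq> {}" using big by (intro notI) simp
  have "configuration \<theta>"
  proof (rule ccontr)
    assume "\<not> configuration \<theta>"
    then have "chromatic_number E C \<le> \<theta> + \<kappa> + w + \<kappa> * \<tau>"
      by (rule chromatic_number_le_if_no_configuration)
    also have "\<dots> \<le> w * \<tau> * (4 * (l + 2) * \<kappa> + w)"
      unfolding \<theta>_def using threshold_le w_pos \<tau>_pos \<open>C \<noteq> {}\<close> by blast
    finally show False using big by simp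
  qed
  then show ?thesis using path_from_configuration[of \<theta> l] l3 \<theta>_def by simp
qed

end
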